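(* Let $k\geq3$ and let $\lambda,\mu\in\mathbb{C}$ satisfy $$\Big(\lambda+\frac{k-2}{3}\Big)\Big(\mu-\frac{k+1}{3}\Big)+\frac{1}{36}(k+1)(k-2)=0.$$ Define $W:\mathcal{D}^k_{\lambda,\mu}(S^1)\to\mathcal{F}_{\mu-\lambda-k+2}$ by $$W\Big(\sum_{i=0}^k a_i(x)\frac{d^i}{dx^i}\Big)=\big(\alpha_2\,a_k''(x)+\alpha_1\,a_{k-1}'(x)+\alpha_0\,a_{k-2}(x)\big)(dx)^{\mu-\lambda-k+2},$$ where $\alpha_2=\tfrac23 k(k-1)(k+3\lambda-2)^2$, $\alpha_1=2(k-1)(k+3\lambda-2)(2-2\lambda-k)$, $\alpha_0=3k^2+12\lambda k+12\lambda^2-11k-24\lambda+10$. Then $W$ is well defined (independent of the coordinate $x$) and $\mathrm{Diff}(S^1)$-equivariant.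
   Context: For $\lambda\in\mathbb{C}$, $\mathcal{F}_\lambda$ denotes the space of smooth $\lambda$-densities $\phi(x)(dx)^\lambda$ on $S^1$ with $\mathrm{Diff}(S^1)$-action $\rho^\lambda_{f^{-1}}:\phi(x)(dx)^\lambda\mapsto (f'(x))^\lambda\phi(f(x))(dx)^\lambda$. $\mathcal{D}^k_{\lambda,\mu}(S^1)$ is the space of linear differential operators $A=\sum_{i=0}^k a_i(x)\frac{d^i}{dx^i}:\mathcal{F}_\lambda\to\mathcal{F}_\mu$ of order $\le k$ (in a local coordinate $x$), with $\mathrm{Diff}(S^1)$-action $A\mapsto\rho^\mu_f\circ A\circ\rho^\lambda_{f^{-1}}$. *)

theory Defs
  imports "HOL-Analysis.Analysis"
begin

text \<open>The circle S^1 is modelled as R/Z: functions on S^1 are 1-periodic functions on the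
  real line, and the coordinate x is the standard one.\<close>

definition Dv :: "(real \<Rightarrow> complex) \<Rightarrow> real \<Rightarrow> complex" where
  "Dv \<phi> = (\<lambda>x. vector_derivative \<phi> (at x))"

text \<open>Smooth (C-infinity) complex-valued 1-periodic functions: lambda-densities in the
  coordinate x, and coefficients of differential operators.\<close>
definition smooth_per :: "(real \<Rightarrow> complex) \<Rightarrow> bool" where
  "smooth_per \<phi> \<longleftrightarrow> (\<forall>n x. (Dv ^^ n) \<phi> differentiable (at x)) \<and> (\<forall>x. \<phi> (x + 1) = \<phi> x)"

text \<open>Orientation preserving diffeomorphisms of S^1, via their lifts to R
  (smooth, f' > 0, f(x+1) = f(x) + 1).\<close>
definition diffeo_lift :: "(real \<Rightarrow> real) \<Rightarrow> bool" where
  "diffeo_lift f \<longleftrightarrow> (\<forall>n x. (deriv ^^ n) f differentiable (at x))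
      \<and> (\<forall>x. deriv f x > 0) \<and> (\<forall>x. f (x + 1) = f x + 1)"

text \<open>rho_dens l h phi = (h')^l (phi o h), i.e. the action rho^l_{h^{-1}} of the paper.\<close>
definition rho_dens :: "complex \<Rightarrow> (real \<Rightarrow> real) \<Rightarrow> (real \<Rightarrow> complex) \<Rightarrow> real \<Rightarrow> complex" where
  "rho_dens l h \<phi> = (\<lambda>x. (complex_of_real (deriv h x)) powr l * \<phi> (h x))"

definition diffop :: "nat \<Rightarrow> (nat \<Rightarrow> real \<Rightarrow> complex) \<Rightarrow> (real \<Rightarrow> complex) \<Rightarrow> real \<Rightarrow> complex" where
  "diffop k a \<phi> = (\<lambda>x. \<Sum>i\<le>k. a i x * (Dv ^^ i) \<phi> x)"

definition Wop :: "nat \<Rightarrow> complex \<Rightarrow> complex \<Rightarrow> (nat \<Rightarrow> real \<Rightarrow> complex) \<Rightarrow> real \<Rightarrow> complex" where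
  "Wop k l m a = (\<lambda>x.
     let kk = of_nat k :: complex;
         \<alpha>2 = 2/3 * kk * (kk - 1) * (kk + 3*l - 2)^2;
         \<alpha>1 = 2 * (kk - 1) * (kk + 3*l - 2) * (2 - 2*l - kk);
         \<alpha>0 = 3*kk^2 + 12*l*kk + 12*l^2 - 11*kk - 24*l + 10
     in \<alpha>2 * Dv (Dv (a k)) x + \<alpha>1 * Dv (a (k - 1)) x + \<alpha>0 * a (k - 2) x)"

end

theory Submission
  imports Defs
begin

(* Testing the hypothesis on the periodic exponentials exp (2 pi i n x) turns it into a polynomial
   identity in the frequency s, which yields the transformation law of the coefficients:
   b j o f = (f')^(-m) * sum_i a i * q_ij, where q_ij is the coefficient of s^j in
   exp (-s f) (d/dx)^i ((f')^l exp (s f)).  Only b k, b (k-1), b (k-2) enter W, and with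
   u = f''/f' and t = f'''/f' the relevant q_ij are (f')^(l+j) times 1, u, and a combination
   of t and u^2.  Differentiating along inv f, W b - rho (W a) becomes a combination of
   u a_k', u a_(k-1), t a_k and u^2 a_k whose coefficients are multiples of the polynomial
   in the hypothesis on (lambda, mu), hence vanish. *)

lemma diffeo_lift_has_deriv_funpow:
  assumes "diffeo_lift f"
  shows "((deriv ^^ n) f has_real_derivative (deriv ^^ Suc n) f x) (at x)"
  using assms by (simp add: diffeo_lift_def DERIV_deriv_iff_real_differentiable)

lemma diffeo_lift_has_deriv:
  "diffeo_lift f \<Longrightarrow> (f has_real_derivative deriv f x) (at x)"
  using diffeo_lift_has_deriv_funpow[of f 0] by simp

lemma diffeo_lift_deriv_pos: "diffeo_lift f \<Longrightarrow> deriv f x > 0"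
  by (simp add: diffeo_lift_def)

lemma diffeo_lift_add_nat:
  assumes "diffeo_lift f"
  shows "f (x + real n) = f x + real n"
proof (induction n)
  case 0
  show ?case by simp
next
  case (Suc n)
  have per: "f (z + 1) = f z + 1" for z
    using assms unfolding diffeo_lift_def by blast
  have "f (x + real (Suc n)) = f (x + real n + 1)"
    by (simp add: algebra_simps)
  also have "\<dots> = f x + real (Suc n)"
    using per Suc.IH by simp
  finally show ?case .
qed

lemma diffeo_lift_bij:
  assumes f: "diffeo_lift f"
  shows "bij f"
proof (rule bijI)
  have "strict_mono f"
  proof (rule strict_monoI)
    show "f x < f y" if "x < y" for x y
      using that
    proof (rule DERIV_pos_imp_increasing)
      fix z
      show "\<exists>d. (f has_real_derivative d) (at z) \<and> d > 0"
        using diffeo_lift_has_deriv[OF f] diffeo_lift_deriv_pos[OF f] by blast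
    qed
  qed
  then show "inj f"
    by (rule strict_mono_imp_inj_on)
  show "surj f"
  proof (rule surjI)
    fix y
    define n where "n = nat \<lceil>\<bar>y - f 0\<bar>\<rceil>"
    have "f (- real n) = f 0 - real n" "f (real n) = f 0 + real n"
      using diffeo_lift_add_nat[OF f, of "- real n" n] diffeo_lift_add_nat[OF f, of 0 n]
      by simp_all
    then have "f (- real n) \<le> y" "y \<le> f (real n)"
      unfolding n_def by linarith+
    moreover have "\<forall>x. isCont f x"
      using DERIV_isCont[OF diffeo_lift_has_deriv[OF f]] by blast
    ultimately have "\<exists>x. f x = y"
      using IVT[of f "- real n" y "real n"] by force
    then show "f (inv f y) = y"
      by (metis f_inv_into_f rangeI)
  qed
qed

lemma diffeo_lift_inv_has_deriv:
  assumes f: "diffeo_lift f"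
  shows "(inv f has_real_derivative 1 / deriv f (inv f y)) (at y)"
proof -
  have fg: "\<And>y. f (inv f y) = y" and gf: "\<And>x. inv f (f x) = x"
    using diffeo_lift_bij[OF f] by (auto simp: bij_def surj_f_inv_f)
  have cont: "isCont f x" for x
    using DERIV_isCont[OF diffeo_lift_has_deriv[OF f]] .
  have "isCont (inv f) (f (inv f y))"
    by (rule isCont_inverse_function[where d=1]) (simp_all add: gf cont)
  then have "(inv f has_real_derivative inverse (deriv f (inv f y))) (at y)"
    using diffeo_lift_deriv_pos[OF f, of "inv f y"]
    by (intro DERIV_inverse_function[where f=f and a="y - 1" and b="y + 1"])
      (simp_all add: fg diffeo_lift_has_deriv[OF f])
  then show ?thesis
    by (simp add: divide_inverse)
qed

lemma Dv_eqI: "(g has_vector_derivative g') (at x) \<Longrightarrow> Dv g x = g'"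
  by (simp add: Dv_def vector_derivative_at)

lemma smooth_per_has_vector_derivative:
  "smooth_per \<phi> \<Longrightarrow> ((Dv ^^ n) \<phi> has_vector_derivative (Dv ^^ Suc n) \<phi> x) (at x)"
  by (simp add: smooth_per_def Dv_def vector_derivative_works)

definition deriv_powr :: "(real \<Rightarrow> real) \<Rightarrow> complex \<Rightarrow> real \<Rightarrow> complex" where
  "deriv_powr f w x = exp (w * of_real (ln (deriv f x)))"

definition deriv_ratio :: "(real \<Rightarrow> real) \<Rightarrow> nat \<Rightarrow> real \<Rightarrow> complex" where
  "deriv_ratio f n x = of_real ((deriv ^^ n) f x / deriv f x)"

lemma deriv_powr_add: "deriv_powr f (v + w) x = deriv_powr f v x * deriv_powr f w x"
  by (simp add: deriv_powr_def distrib_right exp_add)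

lemma deriv_powr_mult_eq: "v + w = u \<Longrightarrow> deriv_powr f v x * deriv_powr f w x = deriv_powr f u x"
  by (simp add: deriv_powr_add[symmetric])

lemma deriv_powr_1: "diffeo_lift f \<Longrightarrow> deriv_powr f 1 x = of_real (deriv f x)"
  using diffeo_lift_deriv_pos[of f x] by (simp add: deriv_powr_def exp_of_real)

lemma powr_deriv_eq_deriv_powr:
  "diffeo_lift f \<Longrightarrow> of_real (deriv f x) powr w = deriv_powr f w x"
  using diffeo_lift_deriv_pos[of f x] by (simp add: powr_def deriv_powr_def Ln_of_real)

lemma powr_deriv_inv_eq_deriv_powr:
  assumes f: "diffeo_lift f"
  shows "of_real (deriv (inv f) y) powr w = deriv_powr f (- w) (inv f y)"
proof -
  have pos: "deriv f (inv f y) > 0"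
    using diffeo_lift_deriv_pos[OF f] .
  have "deriv (inv f) y = 1 / deriv f (inv f y)"
    using diffeo_lift_inv_has_deriv[OF f] by (rule DERIV_imp_deriv)
  then show ?thesis
    using pos by (simp add: powr_def deriv_powr_def Ln_of_real ln_div del: of_real_divide)
qed

lemma deriv_powr_has_vector_derivative:
  assumes f: "diffeo_lift f"
  shows "(deriv_powr f w has_vector_derivative w * deriv_ratio f 2 x * deriv_powr f w x) (at x)"
proof -
  have "((\<lambda>x. ln (deriv f x)) has_real_derivative (deriv ^^ 2) f x / deriv f x) (at x)"
    using diffeo_lift_has_deriv_funpow[OF f, of 1 x] diffeo_lift_deriv_pos[OF f, of x]
    by (auto intro!: derivative_eq_intros simp: numeral_2_eq_2)
  then have "((\<lambda>x. w * of_real (ln (deriv f x))) has_vector_derivative w * deriv_ratio f 2 x) (at x)"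
    unfolding deriv_ratio_def
    by (intro has_vector_derivative_mult_right has_vector_derivative_of_real)
  from field_vector_diff_chain_at[OF this DERIV_exp]
  show ?thesis
    by (simp add: deriv_powr_def[abs_def] o_def ac_simps)
qed

lemma deriv_ratio_has_vector_derivative:
  assumes f: "diffeo_lift f"
  shows "(deriv_ratio f n has_vector_derivative
           deriv_ratio f (Suc n) x - deriv_ratio f n x * deriv_ratio f 2 x) (at x)"
proof -
  have "((\<lambda>x. (deriv ^^ n) f x / deriv f x) has_real_derivative
          (deriv ^^ Suc n) f x / deriv f x - (deriv ^^ n) f x / deriv f x * ((deriv ^^ 2) f x / deriv f x)) (at x)"
    using diffeo_lift_has_deriv_funpow[OF f, of n x] diffeo_lift_has_deriv_funpow[OF f, of 1 x]
      diffeo_lift_deriv_pos[OF f, of x]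
    by (auto intro!: derivative_eq_intros simp: numeral_2_eq_2 field_simps power2_eq_square)
  then show ?thesis
    unfolding deriv_ratio_def[abs_def] by (rule has_vector_derivative_of_real[THEN has_vector_derivative_eq_rhs]) simp
qed

lemma deriv_mult_deriv_powr:
  "diffeo_lift f \<Longrightarrow> of_real (deriv f x) * deriv_powr f w x = deriv_powr f (w + 1) x"
  by (simp add: deriv_powr_add deriv_powr_1 mult.commute)

lemma Dv_deriv_powr:
  "diffeo_lift f \<Longrightarrow> Dv (deriv_powr f w) x = w * deriv_ratio f 2 x * deriv_powr f w x"
  by (rule Dv_eqI[OF deriv_powr_has_vector_derivative])

lemma Dv_deriv_ratio_mult_deriv_powr:
  assumes f: "diffeo_lift f"
  shows "Dv (\<lambda>x. c * deriv_ratio f n x * deriv_powr f w x) x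
       = c * (deriv_ratio f (Suc n) x + (w - 1) * deriv_ratio f n x * deriv_ratio f 2 x) * deriv_powr f w x"
  by (rule Dv_eqI, rule has_vector_derivative_eq_rhs)
    (rule derivative_eq_intros deriv_ratio_has_vector_derivative[OF f]
       deriv_powr_has_vector_derivative[OF f] refl | simp add: algebra_simps)+

(* The smoothness of the deriv_coeff comes from this algebra being closed under Dv. *)
inductive_set deriv_alg :: "(real \<Rightarrow> real) \<Rightarrow> (real \<Rightarrow> complex) set" for f where
  const: "(\<lambda>x. c) \<in> deriv_alg f"
| deriv_ratio: "deriv_ratio f n \<in> deriv_alg f"
| deriv_powr: "deriv_powr f w \<in> deriv_alg f"
| add: "g \<in> deriv_alg f \<Longrightarrow> h \<in> deriv_alg f \<Longrightarrow> (\<lambda>x. g x + h x) \<in> deriv_alg f"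
| mult: "g \<in> deriv_alg f \<Longrightarrow> h \<in> deriv_alg f \<Longrightarrow> (\<lambda>x. g x * h x) \<in> deriv_alg f"

lemma deriv_alg_has_vector_derivative:
  assumes f: "diffeo_lift f" and "g \<in> deriv_alg f"
  shows "\<exists>g'\<in>deriv_alg f. \<forall>x. (g has_vector_derivative g' x) (at x)"
  using assms(2)
proof induction
  case (const c)
  show ?case
    by (rule bexI[of _ "\<lambda>x. 0"]) (auto intro: deriv_alg.const)
next
  case (deriv_ratio n)
  have "(\<lambda>x. deriv_ratio f (Suc n) x + (- 1) * (deriv_ratio f n x * deriv_ratio f 2 x)) \<in> deriv_alg f"
    by (intro deriv_alg.intros)
  then show ?case
    by (rule bexI[rotated]) (use deriv_ratio_has_vector_derivative[OF f] in auto)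
next
  case (deriv_powr w)
  have "(\<lambda>x. w * deriv_ratio f 2 x * deriv_powr f w x) \<in> deriv_alg f"
    by (intro deriv_alg.intros)
  then show ?case
    by (rule bexI[rotated]) (use deriv_powr_has_vector_derivative[OF f] in auto)
next
  case (add g h)
  then obtain g' h' where "g' \<in> deriv_alg f" "h' \<in> deriv_alg f"
    and "\<forall>x. (g has_vector_derivative g' x) (at x)" "\<forall>x. (h has_vector_derivative h' x) (at x)"
    by blast
  then show ?case
    by (intro bexI[of _ "\<lambda>x. g' x + h' x"]) (auto intro!: deriv_alg.intros derivative_intros)
next
  case (mult g h)
  then obtain g' h' where "g' \<in> deriv_alg f" "h' \<in> deriv_alg f"
    and "\<forall>x. (g has_vector_derivative g' x) (at x)" "\<forall>x. (h has_vector_derivative h' x) (at x)"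
    by blast
  then show ?case
    using mult.hyps
    by (intro bexI[of _ "\<lambda>x. g x * h' x + g' x * h x"]) (auto intro!: deriv_alg.intros derivative_intros)
qed

lemma
  assumes "diffeo_lift f" and "g \<in> deriv_alg f"
  shows deriv_alg_Dv: "Dv g \<in> deriv_alg f"
    and deriv_alg_has_Dv: "(g has_vector_derivative Dv g x) (at x)"
proof -
  obtain g' where "g' \<in> deriv_alg f" and g': "\<And>x. (g has_vector_derivative g' x) (at x)"
    using deriv_alg_has_vector_derivative[OF assms] by blast
  moreover have "Dv g = g'"
    using g' by (auto intro: Dv_eqI)
  ultimately show "Dv g \<in> deriv_alg f" "(g has_vector_derivative Dv g x) (at x)"
    by auto
qed

(* deriv_coeff f l i j is the coefficient of s^j in exp (-s f) * (d/dx)^i ((f')^l exp (s f)). *)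
fun deriv_coeff :: "(real \<Rightarrow> real) \<Rightarrow> complex \<Rightarrow> nat \<Rightarrow> nat \<Rightarrow> real \<Rightarrow> complex" where
  "deriv_coeff f l 0 j = (if j = 0 then deriv_powr f l else (\<lambda>x. 0))"
| "deriv_coeff f l (Suc i) 0 = Dv (deriv_coeff f l i 0)"
| "deriv_coeff f l (Suc i) (Suc j) =
     (\<lambda>x. Dv (deriv_coeff f l i (Suc j)) x + of_real (deriv f x) * deriv_coeff f l i j x)"

lemma deriv_coeff_in_deriv_alg:
  assumes f: "diffeo_lift f"
  shows "deriv_coeff f l i j \<in> deriv_alg f"
proof (induction i arbitrary: j)
  case 0
  show ?case
    by (auto intro: deriv_alg.intros)
next
  case (Suc i)
  have "(\<lambda>x. of_real (deriv f x)) = deriv_powr f 1"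
    by (simp add: fun_eq_iff deriv_powr_1[OF f])
  with deriv_alg.deriv_powr[of f 1] have "(\<lambda>x. of_real (deriv f x)) \<in> deriv_alg f"
    by simp
  then show ?case
    using deriv_alg_Dv[OF f Suc.IH] Suc.IH
    by (cases j) (auto intro!: deriv_alg.intros)
qed

lemma Dv_const_0: "Dv (\<lambda>x. 0) = (\<lambda>x. 0)"
  by (simp add: Dv_def)

lemma deriv_coeff_eq_0: "i < j \<Longrightarrow> deriv_coeff f l i j = (\<lambda>x. 0)"
proof (induction i arbitrary: j)
  case (Suc i)
  then show ?case
    by (cases j) (auto simp: Dv_const_0)
qed simp

lemma exp_mult_of_real_has_vector_derivative:
  fixes s :: complex
  shows "(g has_real_derivative g') (at x) \<Longrightarrow>
    ((\<lambda>x. exp (s * of_real (g x))) has_vector_derivative s * of_real g' * exp (s * of_real (g x))) (at x)"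
proof -
  assume "(g has_real_derivative g') (at x)"
  then have "((\<lambda>x. s * of_real (g x)) has_vector_derivative s * of_real g') (at x)"
    by (intro has_vector_derivative_mult_right has_vector_derivative_of_real)
  from field_vector_diff_chain_at[OF this DERIV_exp]
  show ?thesis
    by (simp add: o_def ac_simps)
qed

lemma Dv_funpow_deriv_powr_mult_exp:
  assumes f: "diffeo_lift f"
  shows "(Dv ^^ i) (\<lambda>x. deriv_powr f l x * exp (s * of_real (f x)))
       = (\<lambda>x. exp (s * of_real (f x)) * (\<Sum>j\<le>i. deriv_coeff f l i j x * s ^ j))"
proof (induction i)
  case 0
  show ?case
    by (simp add: mult.commute)
next
  case (Suc i)
  let ?e = "\<lambda>x. exp (s * of_real (f x))"
  let ?q = "deriv_coeff f l"
  show ?case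
  proof
    fix x
    have "((\<lambda>x. ?e x * (\<Sum>j\<le>i. ?q i j x * s ^ j)) has_vector_derivative
      ?e x * (\<Sum>j\<le>i. Dv (?q i j) x * s ^ j) + s * of_real (deriv f x) * ?e x * (\<Sum>j\<le>i. ?q i j x * s ^ j)) (at x)"
      by (rule has_vector_derivative_eq_rhs)
        (rule derivative_eq_intros exp_mult_of_real_has_vector_derivative diffeo_lift_has_deriv[OF f]
           deriv_alg_has_Dv[OF f deriv_coeff_in_deriv_alg[OF f]] refl | simp)+
    then have "(Dv ^^ Suc i) (\<lambda>x. deriv_powr f l x * ?e x) x
        = ?e x * ((\<Sum>j\<le>i. Dv (?q i j) x * s ^ j) + s * of_real (deriv f x) * (\<Sum>j\<le>i. ?q i j x * s ^ j))"
      using Suc.IH by (simp add: Dv_eqI algebra_simps)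
    also have "(\<Sum>j\<le>i. Dv (?q i j) x * s ^ j) = (\<Sum>j\<le>Suc i. Dv (?q i j) x * s ^ j)"
      by (simp add: deriv_coeff_eq_0 Dv_const_0)
    also have "\<dots> + s * of_real (deriv f x) * (\<Sum>j\<le>i. ?q i j x * s ^ j)
        = (\<Sum>j\<le>Suc i. ?q (Suc i) j x * s ^ j)"
      unfolding sum.atMost_Suc_shift
      by (simp add: sum_distrib_left distrib_right sum.distrib algebra_simps)
    finally show "(Dv ^^ Suc i) (\<lambda>x. deriv_powr f l x * ?e x) x = ?e x * (\<Sum>j\<le>Suc i. ?q (Suc i) j x * s ^ j)" .
  qed
qed

lemma rho_dens_eq: "diffeo_lift f \<Longrightarrow> rho_dens l f \<phi> = (\<lambda>x. deriv_powr f l x * \<phi> (f x))"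
  by (simp add: rho_dens_def powr_deriv_eq_deriv_powr)

lemma diffop_rho_dens_exp:
  assumes f: "diffeo_lift f"
  shows "diffop k a (rho_dens l f (\<lambda>y. exp (s * of_real y))) x
       = exp (s * of_real (f x)) * (\<Sum>j\<le>k. (\<Sum>i\<le>k. a i x * deriv_coeff f l i j x) * s ^ j)"
proof -
  have extend: "(\<Sum>j\<le>i. deriv_coeff f l i j x * s ^ j) = (\<Sum>j\<le>k. deriv_coeff f l i j x * s ^ j)"
    if "i \<in> {..k}" for i
    using that by (intro sum.mono_neutral_left) (auto simp: deriv_coeff_eq_0)
  have "diffop k a (rho_dens l f (\<lambda>y. exp (s * of_real y))) x
      = exp (s * of_real (f x)) * (\<Sum>i\<le>k. a i x * (\<Sum>j\<le>i. deriv_coeff f l i j x * s ^ j))"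
    unfolding diffop_def rho_dens_eq[OF f] Dv_funpow_deriv_powr_mult_exp[OF f]
    by (simp add: sum_distrib_left ac_simps)
  also have "\<dots> = exp (s * of_real (f x)) * (\<Sum>i\<le>k. \<Sum>j\<le>k. a i x * deriv_coeff f l i j x * s ^ j)"
    using extend by (simp add: sum_distrib_left mult.assoc del: sum.atMost_Suc)
  also have "\<dots> = exp (s * of_real (f x)) * (\<Sum>j\<le>k. (\<Sum>i\<le>k. a i x * deriv_coeff f l i j x) * s ^ j)"
    by (subst sum.swap) (simp add: sum_distrib_right)
  finally show ?thesis .
qed

lemma exp_scaled_has_vector_derivative:
  fixes s :: complex
  shows "((\<lambda>y. exp (s * of_real y)) has_vector_derivative s * exp (s * of_real y)) (at y)"
  using exp_mult_of_real_has_vector_derivative[OF DERIV_ident] by simp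

lemma Dv_funpow_exp: "(Dv ^^ i) (\<lambda>y. exp (s * of_real y)) = (\<lambda>y. s ^ i * exp (s * of_real y))"
proof (induction i)
  case (Suc i)
  have "((\<lambda>y. s ^ i * exp (s * of_real y)) has_vector_derivative s ^ Suc i * exp (s * of_real y)) (at y)"
    for y
    using has_vector_derivative_mult_right[OF exp_scaled_has_vector_derivative, of "s ^ i"]
    by (simp add: ac_simps)
  then show ?case
    using Suc.IH by (auto intro: Dv_eqI)
qed simp

lemma smooth_per_exp_2pi:
  "smooth_per (\<lambda>y. exp (\<i> * (of_int n * (of_real pi * 2)) * of_real y))"
  unfolding smooth_per_def Dv_funpow_exp
proof (intro conjI allI)
  fix i x
  show "(\<lambda>y. (\<i> * (of_int n * (of_real pi * 2))) ^ i * exp (\<i> * (of_int n * (of_real pi * 2)) * of_real y))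
      differentiable at x"
    by (rule differentiableI_vector[OF has_vector_derivative_mult_right[OF exp_scaled_has_vector_derivative]])
next
  fix x :: real
  have "\<i> * (of_int n * (of_real pi * 2)) * of_real (x + 1)
      = \<i> * (of_int n * (of_real pi * 2)) * of_real x + \<i> * (of_int n * (of_real pi * 2))"
    by (simp add: algebra_simps)
  then show "exp (\<i> * (of_int n * (of_real pi * 2)) * of_real (x + 1))
      = exp (\<i> * (of_int n * (of_real pi * 2)) * of_real x)"
    by (simp only: exp_plus_2pin)
qed

lemma polyfun_coeffs_eq:
  fixes c d :: "nat \<Rightarrow> 'a::{comm_ring,real_normed_div_algebra}"
  assumes "infinite S" and "\<And>z. z \<in> S \<Longrightarrow> (\<Sum>j\<le>k. c j * z ^ j) = (\<Sum>j\<le>k. d j * z ^ j)"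
    and "j \<le> k"
  shows "c j = d j"
proof -
  have "S \<subseteq> {z. (\<Sum>j\<le>k. (c j - d j) * z ^ j) = 0}"
    using assms(2) by (auto simp: left_diff_distrib sum_subtractf)
  then have "infinite {z. (\<Sum>j\<le>k. (c j - d j) * z ^ j) = 0}"
    using assms(1) finite_subset by blast
  then show ?thesis
    using assms(3) polyfun_finite_roots[of "\<lambda>j. c j - d j" k] by auto
qed

lemma diffop_coeff_transform:
  assumes f: "diffeo_lift f" and "j \<le> k"
    and H: "\<forall>\<phi>. smooth_per \<phi> \<longrightarrow>
           diffop k b \<phi> = rho_dens m (inv f) (diffop k a (rho_dens l f \<phi>))"
  shows "b j y = deriv_powr f (- m) (inv f y) * (\<Sum>i\<le>k. a i (inv f y) * deriv_coeff f l i j (inv f y))"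
proof -
  define x where "x = inv f y"
  have fx: "f x = y"
    using diffeo_lift_bij[OF f] by (simp add: x_def bij_is_surj surj_f_inv_f)
  define S where "S = range (\<lambda>n::int. \<i> * (of_int n * (of_real pi * 2)))"
  have "inj (\<lambda>n::int. \<i> * (of_int n * (of_real pi * 2)))"
    by (rule injI) simp
  then have "infinite S"
    unfolding S_def using finite_imageD infinite_UNIV_int by metis
  moreover have "(\<Sum>j\<le>k. b j y * s ^ j)
      = (\<Sum>j\<le>k. (deriv_powr f (- m) x * (\<Sum>i\<le>k. a i x * deriv_coeff f l i j x)) * s ^ j)"
    if s: "s \<in> S" for s
  proof -
    obtain n where "s = \<i> * (of_int n * (of_real pi * 2))"
      using s unfolding S_def by blast
    then have "smooth_per (\<lambda>y. exp (s * of_real y))"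
      using smooth_per_exp_2pi by simp
    then have "diffop k b (\<lambda>y. exp (s * of_real y)) y
        = rho_dens m (inv f) (diffop k a (rho_dens l f (\<lambda>y. exp (s * of_real y)))) y"
      using H by simp
    moreover have "diffop k b (\<lambda>y. exp (s * of_real y)) y = exp (s * of_real y) * (\<Sum>j\<le>k. b j y * s ^ j)"
      by (simp add: diffop_def Dv_funpow_exp sum_distrib_left ac_simps)
    moreover have "rho_dens m (inv f) (diffop k a (rho_dens l f (\<lambda>y. exp (s * of_real y)))) y
        = exp (s * of_real y) * (\<Sum>j\<le>k. (deriv_powr f (- m) x * (\<Sum>i\<le>k. a i x * deriv_coeff f l i j x)) * s ^ j)"
      unfolding rho_dens_def[of m "inv f"] powr_deriv_inv_eq_deriv_powr[OF f] diffop_rho_dens_exp[OF f]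
      by (simp add: x_def[symmetric] fx sum_distrib_left ac_simps)
    ultimately show ?thesis
      by simp
  qed
  ultimately show ?thesis
    unfolding x_def by (rule polyfun_coeffs_eq[OF _ _ \<open>j \<le> k\<close>])
qed

definition subdiag1_coeff :: "complex \<Rightarrow> complex \<Rightarrow> complex" where
  "subdiag1_coeff l \<nu> = (\<nu> + 1) * (l + \<nu> / 2)"

definition subdiag2_coeff_t :: "complex \<Rightarrow> complex \<Rightarrow> complex" where
  "subdiag2_coeff_t l \<nu> = (\<nu> + 2) * (\<nu> + 1) / 2 * l + (\<nu> + 2) * (\<nu> + 1) * \<nu> / 6"

definition subdiag2_coeff_u :: "complex \<Rightarrow> complex \<Rightarrow> complex" where
  "subdiag2_coeff_u l \<nu> = (\<nu> + 2) * (\<nu> + 1) / 2 * l * (l - 1) + (\<nu> + 2) * (\<nu> + 1) * \<nu> / 2 * l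
     + (\<nu> + 2) * (\<nu> + 1) * \<nu> * (\<nu> - 1) / 8"

lemma subdiag1_coeff_succ: "subdiag1_coeff l (\<nu> + 1) = subdiag1_coeff l \<nu> + (l + \<nu> + 1)"
  by (simp add: subdiag1_coeff_def field_simps)

lemma subdiag2_coeff_t_succ: "subdiag2_coeff_t l (\<nu> + 1) = subdiag2_coeff_t l \<nu> + subdiag1_coeff l (\<nu> + 1)"
  by (simp add: subdiag2_coeff_t_def subdiag1_coeff_def field_simps)

lemma subdiag2_coeff_u_succ: "subdiag2_coeff_u l (\<nu> + 1) = subdiag2_coeff_u l \<nu> + (l + \<nu>) * subdiag1_coeff l (\<nu> + 1)"
  by (simp add: subdiag2_coeff_u_def subdiag1_coeff_def field_simps)

lemma deriv_coeff_diag: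
  assumes f: "diffeo_lift f"
  shows "deriv_coeff f l i i = deriv_powr f (l + of_nat i)"
proof (induction i)
  case (Suc i)
  then show ?case
    by (simp add: deriv_coeff_eq_0 Dv_const_0 deriv_mult_deriv_powr[OF f] ac_simps)
qed simp

lemma deriv_coeff_Suc_diag:
  assumes f: "diffeo_lift f"
  shows "deriv_coeff f l (Suc i) i = (\<lambda>x. subdiag1_coeff l (of_nat i) * deriv_ratio f 2 x * deriv_powr f (l + of_nat i) x)"
proof (induction i)
  case 0
  show ?case
    by (simp add: fun_eq_iff Dv_deriv_powr[OF f] subdiag1_coeff_def)
next
  case (Suc i)
  define v where "v = l + of_nat i"
  have v: "l + of_nat (Suc i) = v + 1" and i: "of_nat (Suc i) = of_nat i + (1 :: complex)"
    by (simp_all add: v_def)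
  show ?case
  proof
    fix x
    have "deriv_coeff f l (Suc (Suc i)) (Suc i) x
        = Dv (deriv_powr f (v + 1)) x + of_real (deriv f x) * (subdiag1_coeff l (of_nat i) * deriv_ratio f 2 x * deriv_powr f v x)"
      unfolding deriv_coeff.simps(3)[of f l "Suc i" i] deriv_coeff_diag[OF f] Suc.IH v v_def ..
    also have "\<dots> = (subdiag1_coeff l (of_nat i) + (v + 1)) * deriv_ratio f 2 x * deriv_powr f (v + 1) x"
      unfolding Dv_deriv_powr[OF f] deriv_mult_deriv_powr[OF f, symmetric] by (simp add: algebra_simps)
    also have "\<dots> = subdiag1_coeff l (of_nat (Suc i)) * deriv_ratio f 2 x * deriv_powr f (l + of_nat (Suc i)) x"
      unfolding v i subdiag1_coeff_succ v_def by (simp add: add.assoc)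
    finally show "deriv_coeff f l (Suc (Suc i)) (Suc i) x = \<dots>" .
  qed
qed

lemma deriv_coeff_Suc_Suc_diag:
  assumes f: "diffeo_lift f"
  shows "deriv_coeff f l (Suc (Suc i)) i = (\<lambda>x.
    (subdiag2_coeff_t l (of_nat i) * deriv_ratio f 3 x + subdiag2_coeff_u l (of_nat i) * (deriv_ratio f 2 x)\<^sup>2)
      * deriv_powr f (l + of_nat i) x)"
proof (induction i)
  case 0
  have "deriv_coeff f l (Suc (Suc 0)) 0 = Dv (\<lambda>x. subdiag1_coeff l 0 * deriv_ratio f 2 x * deriv_powr f l x)"
    using deriv_coeff_Suc_diag[OF f, of l 0] by simp
  then show ?case
    unfolding Dv_deriv_ratio_mult_deriv_powr[OF f]
    by (simp add: fun_eq_iff subdiag1_coeff_def subdiag2_coeff_t_def subdiag2_coeff_u_def power2_eq_square algebra_simps)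
next
  case (Suc i)
  define v where "v = l + of_nat i"
  have v: "l + of_nat (Suc i) = v + 1" and i: "of_nat (Suc i) = of_nat i + (1 :: complex)"
    by (simp_all add: v_def)
  show ?case
  proof
    fix x
    have "deriv_coeff f l (Suc (Suc (Suc i))) (Suc i) x
        = Dv (\<lambda>x. subdiag1_coeff l (of_nat i + 1) * deriv_ratio f 2 x * deriv_powr f (v + 1) x) x
          + of_real (deriv f x) * ((subdiag2_coeff_t l (of_nat i) * deriv_ratio f 3 x
              + subdiag2_coeff_u l (of_nat i) * (deriv_ratio f 2 x)\<^sup>2) * deriv_powr f v x)"
      unfolding deriv_coeff.simps(3)[of f l "Suc (Suc i)" i] deriv_coeff_Suc_diag[OF f] Suc.IH v i v_def
      by (simp only: add.assoc)
    also have "\<dots> = ((subdiag2_coeff_t l (of_nat i) + subdiag1_coeff l (of_nat i + 1)) * deriv_ratio f 3 x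
        + (subdiag2_coeff_u l (of_nat i) + v * subdiag1_coeff l (of_nat i + 1)) * (deriv_ratio f 2 x)\<^sup>2)
          * deriv_powr f (v + 1) x"
      unfolding Dv_deriv_ratio_mult_deriv_powr[OF f]
      unfolding deriv_mult_deriv_powr[OF f, symmetric]
      by (simp add: algebra_simps power2_eq_square)
    also have "\<dots> = (subdiag2_coeff_t l (of_nat (Suc i)) * deriv_ratio f 3 x
        + subdiag2_coeff_u l (of_nat (Suc i)) * (deriv_ratio f 2 x)\<^sup>2) * deriv_powr f (l + of_nat (Suc i)) x"
      unfolding v i subdiag2_coeff_t_succ subdiag2_coeff_u_succ v_def by (simp only: add.assoc)
    finally show "deriv_coeff f l (Suc (Suc (Suc i))) (Suc i) x = \<dots>" .
  qed
qed

lemma diffop_coeff_transform_upper: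
  assumes f: "diffeo_lift f" and "j \<le> k"
    and H: "\<forall>\<phi>. smooth_per \<phi> \<longrightarrow>
           diffop k b \<phi> = rho_dens m (inv f) (diffop k a (rho_dens l f \<phi>))"
  shows "b j y = deriv_powr f (- m) (inv f y) * (\<Sum>i=j..k. a i (inv f y) * deriv_coeff f l i j (inv f y))"
proof -
  have "(\<Sum>i\<le>k. a i (inv f y) * deriv_coeff f l i j (inv f y)) = (\<Sum>i=j..k. a i (inv f y) * deriv_coeff f l i j (inv f y))"
    by (rule sum.mono_neutral_right) (auto simp: deriv_coeff_eq_0)
  then show ?thesis
    using diffop_coeff_transform[OF f \<open>j \<le> k\<close> H] by simp
qed

lemma diffop_top_coeffs_transform:
  assumes f: "diffeo_lift f" and k: "k = Suc (Suc K)"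
    and H: "\<forall>\<phi>. smooth_per \<phi> \<longrightarrow>
           diffop k b \<phi> = rho_dens m (inv f) (diffop k a (rho_dens l f \<phi>))"
  defines "w \<equiv> l - m + of_nat k - 2" and "u \<equiv> deriv_ratio f 2" and "t \<equiv> deriv_ratio f 3"
  shows "b k y = deriv_powr f (w + 1 + 1) (inv f y) * a k (inv f y)"
    and "b (Suc K) y = deriv_powr f (w + 1) (inv f y) *
           (a (Suc K) (inv f y) + subdiag1_coeff l (of_nat k - 1) * u (inv f y) * a k (inv f y))"
    and "b K y = deriv_powr f w (inv f y) *
           (a K (inv f y) + subdiag1_coeff l (of_nat k - 2) * u (inv f y) * a (Suc K) (inv f y)
            + (subdiag2_coeff_t l (of_nat k - 2) * t (inv f y)
               + subdiag2_coeff_u l (of_nat k - 2) * (u (inv f y))\<^sup>2) * a k (inv f y))"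
proof -
  define x where "x = inv f y"
  have nus: "of_nat K + 1 = (of_nat k - 1 :: complex)" "of_nat K = (of_nat k - 2 :: complex)"
    by (simp_all add: k)
  have bk: "b k y = (deriv_powr f (- m) x * deriv_powr f (l + of_nat k) x) * a k x"
    using diffop_coeff_transform_upper[OF f order_refl H]
    by (simp add: x_def deriv_coeff_diag[OF f] del: deriv_coeff.simps)
  have e2: "- m + (l + of_nat k) = w + 1 + 1"
    by (simp add: w_def)
  from bk show "b k y = deriv_powr f (w + 1 + 1) (inv f y) * a k (inv f y)"
    unfolding deriv_powr_mult_eq[OF e2] x_def .
  have bk1: "b (Suc K) y = (deriv_powr f (- m) x * deriv_powr f (l + of_nat (Suc K)) x) *
           (a (Suc K) x + subdiag1_coeff l (of_nat K + 1) * u x * a k x)"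
    using diffop_coeff_transform_upper[OF f _ H, of "Suc K"] k
    by (simp add: x_def u_def deriv_coeff_diag[OF f] deriv_coeff_Suc_diag[OF f] algebra_simps
        del: deriv_coeff.simps)
  have e1: "- m + (l + of_nat (Suc K)) = w + 1"
    by (simp add: w_def k)
  from bk1 show "b (Suc K) y = deriv_powr f (w + 1) (inv f y) *
           (a (Suc K) (inv f y) + subdiag1_coeff l (of_nat k - 1) * u (inv f y) * a k (inv f y))"
    unfolding deriv_powr_mult_eq[OF e1] unfolding x_def nus(1) .
  have bk2: "b K y = (deriv_powr f (- m) x * deriv_powr f (l + of_nat K) x) *
           (a K x + subdiag1_coeff l (of_nat K) * u x * a (Suc K) x
            + (subdiag2_coeff_t l (of_nat K) * t x
               + subdiag2_coeff_u l (of_nat K) * (u x)\<^sup>2) * a k x)"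
    using diffop_coeff_transform_upper[OF f _ H, of K] k
    by (simp add: x_def u_def t_def deriv_coeff_diag[OF f] deriv_coeff_Suc_diag[OF f] deriv_coeff_Suc_Suc_diag[OF f]
        algebra_simps del: deriv_coeff.simps)
  have e0: "- m + (l + of_nat K) = w"
    by (simp add: w_def k)
  from bk2 show "b K y = deriv_powr f w (inv f y) *
           (a K (inv f y) + subdiag1_coeff l (of_nat k - 2) * u (inv f y) * a (Suc K) (inv f y)
            + (subdiag2_coeff_t l (of_nat k - 2) * t (inv f y)
               + subdiag2_coeff_u l (of_nat k - 2) * (u (inv f y))\<^sup>2) * a k (inv f y))"
    unfolding deriv_powr_mult_eq[OF e0] unfolding x_def nus(2) .
qed

lemma Dv_deriv_powr_mult_comp_inv:
  assumes f: "diffeo_lift f" and g: "\<And>x. (g has_vector_derivative g' x) (at x)"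
  shows "Dv (\<lambda>y. deriv_powr f (w + 1) (inv f y) * g (inv f y))
       = (\<lambda>y. deriv_powr f w (inv f y) * ((w + 1) * deriv_ratio f 2 (inv f y) * g (inv f y) + g' (inv f y)))"
proof
  fix y
  define x where "x = inv f y"
  let ?h = "(w + 1) * deriv_ratio f 2 x * g x + g' x"
  have "(inv f has_vector_derivative 1 / deriv f x) (at y)"
    using diffeo_lift_inv_has_deriv[OF f] by (simp add: x_def has_real_derivative_iff_has_vector_derivative)
  moreover have "((\<lambda>x. deriv_powr f (w + 1) x * g x) has_vector_derivative
      of_real (deriv f x) * (deriv_powr f w x * ?h)) (at (inv f y))"
    using has_vector_derivative_mult[OF deriv_powr_has_vector_derivative[OF f] g, of "w + 1" x]
    unfolding x_def[symmetric]
    by (rule has_vector_derivative_eq_rhs)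
      (simp only: deriv_mult_deriv_powr[OF f, symmetric], simp add: algebra_simps)
  ultimately have "((\<lambda>y. deriv_powr f (w + 1) (inv f y) * g (inv f y)) has_vector_derivative
      deriv_powr f w x * ?h) (at y)"
    using vector_diff_chain_at diffeo_lift_deriv_pos[OF f, of x]
    by (fastforce simp: o_def scaleR_conv_of_real)
  then show "Dv (\<lambda>y. deriv_powr f (w + 1) (inv f y) * g (inv f y)) y
      = deriv_powr f w (inv f y) * ((w + 1) * deriv_ratio f 2 (inv f y) * g (inv f y) + g' (inv f y))"
    unfolding x_def by (rule Dv_eqI)
qed

lemma Dv_Dv_deriv_powr_mult_comp_inv:
  assumes f: "diffeo_lift f" and g: "smooth_per g"
  defines "u \<equiv> deriv_ratio f 2" and "t \<equiv> deriv_ratio f 3"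
  shows "Dv (Dv (\<lambda>y. deriv_powr f (w + 1 + 1) (inv f y) * g (inv f y)))
       = (\<lambda>y. deriv_powr f w (inv f y) *
           ((w + 1) * u (inv f y) * ((w + 1 + 1) * u (inv f y) * g (inv f y) + Dv g (inv f y))
            + ((w + 1 + 1) * (t (inv f y) - (u (inv f y))\<^sup>2) * g (inv f y)
               + (w + 1 + 1) * u (inv f y) * Dv g (inv f y) + Dv (Dv g) (inv f y))))"
proof -
  have dg: "(g has_vector_derivative Dv g x) (at x)" and ddg: "(Dv g has_vector_derivative Dv (Dv g) x) (at x)" for x
    using smooth_per_has_vector_derivative[OF g, of 0 x] smooth_per_has_vector_derivative[OF g, of 1 x] by simp_all
  have "((\<lambda>x. (w + 1 + 1) * u x * g x + Dv g x) has_vector_derivative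
      (w + 1 + 1) * (t x - (u x)\<^sup>2) * g x + (w + 1 + 1) * u x * Dv g x + Dv (Dv g) x) (at x)" for x
    unfolding u_def t_def
    by (rule has_vector_derivative_eq_rhs)
      (rule derivative_eq_intros deriv_ratio_has_vector_derivative[OF f] dg ddg refl
       | simp add: algebra_simps power2_eq_square)+
  then show ?thesis
    unfolding Dv_deriv_powr_mult_comp_inv[OF f dg] u_def by (rule Dv_deriv_powr_mult_comp_inv[OF f])
qed

lemma Dv_deriv_powr_mult_comp_inv_add:
  assumes f: "diffeo_lift f" and g: "smooth_per g" and h: "smooth_per h"
  defines "u \<equiv> deriv_ratio f 2" and "t \<equiv> deriv_ratio f 3"
  shows "Dv (\<lambda>y. deriv_powr f (w + 1) (inv f y) * (g (inv f y) + c * u (inv f y) * h (inv f y)))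
       = (\<lambda>y. deriv_powr f w (inv f y) *
           ((w + 1) * u (inv f y) * (g (inv f y) + c * u (inv f y) * h (inv f y))
            + (Dv g (inv f y) + c * ((t (inv f y) - (u (inv f y))\<^sup>2) * h (inv f y) + u (inv f y) * Dv h (inv f y)))))"
proof -
  have dg: "(g has_vector_derivative Dv g x) (at x)" and dh: "(h has_vector_derivative Dv h x) (at x)" for x
    using smooth_per_has_vector_derivative[OF g, of 0 x] smooth_per_has_vector_derivative[OF h, of 0 x]
    by simp_all
  have "((\<lambda>x. g x + c * u x * h x) has_vector_derivative
      Dv g x + c * ((t x - (u x)\<^sup>2) * h x + u x * Dv h x)) (at x)" for x
    unfolding u_def t_def
    by (rule has_vector_derivative_eq_rhs)
      (rule derivative_eq_intros deriv_ratio_has_vector_derivative[OF f] dg dh refl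
       | simp add: algebra_simps power2_eq_square)+
  then show ?thesis
    unfolding u_def t_def by (rule Dv_deriv_powr_mult_comp_inv[OF f])
qed

definition W_alpha2 :: "complex \<Rightarrow> complex \<Rightarrow> complex" where
  "W_alpha2 l \<kappa> = 2/3 * \<kappa> * (\<kappa> - 1) * (\<kappa> + 3*l - 2)^2"

definition W_alpha1 :: "complex \<Rightarrow> complex \<Rightarrow> complex" where
  "W_alpha1 l \<kappa> = 2 * (\<kappa> - 1) * (\<kappa> + 3*l - 2) * (2 - 2*l - \<kappa>)"

definition W_alpha0 :: "complex \<Rightarrow> complex \<Rightarrow> complex" where
  "W_alpha0 l \<kappa> = 3*\<kappa>^2 + 12*l*\<kappa> + 12*l^2 - 11*\<kappa> - 24*l + 10"

lemma W_alpha_relations: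
  fixes l m \<kappa> :: complex
  assumes cond: "(l + (\<kappa> - 2) / 3) * (m - (\<kappa> + 1) / 3) + (\<kappa> + 1) * (\<kappa> - 2) / 36 = 0"
    (is "?c = 0")
  defines "w \<equiv> l - m + \<kappa> - 2"
  shows "W_alpha2 l \<kappa> * (2 * w + 3) + W_alpha1 l \<kappa> * subdiag1_coeff l (\<kappa> - 1) = 0"
      (is "?E1 = 0")
    and "W_alpha1 l \<kappa> * (w + 1) + W_alpha0 l \<kappa> * subdiag1_coeff l (\<kappa> - 2) = 0"
      (is "?E2 = 0")
    and "W_alpha2 l \<kappa> * (w + 2) + W_alpha1 l \<kappa> * subdiag1_coeff l (\<kappa> - 1)
         + W_alpha0 l \<kappa> * subdiag2_coeff_t l (\<kappa> - 2) = 0"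
      (is "?E3 = 0")
    and "W_alpha2 l \<kappa> * w * (w + 2) + W_alpha1 l \<kappa> * w * subdiag1_coeff l (\<kappa> - 1)
         + W_alpha0 l \<kappa> * subdiag2_coeff_u l (\<kappa> - 2) = 0"
      (is "?E4 = 0")
proof -
  have "?E1 = - 4 * \<kappa> * (\<kappa> - 1) * (\<kappa> - 2 + 3 * l) * ?c"
    unfolding w_def W_alpha2_def W_alpha1_def subdiag1_coeff_def
    by (simp add: field_simps) (simp add: algebra_simps power2_eq_square)
  then show "?E1 = 0"
    by (simp add: cond)
  have "?E2 = 6 * (\<kappa> - 1) * (\<kappa> - 2 + 2 * l) * ?c"
    unfolding w_def W_alpha1_def W_alpha0_def subdiag1_coeff_def
    by (simp add: field_simps) (simp add: algebra_simps power2_eq_square)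
  then show "?E2 = 0"
    by (simp add: cond)
  have "?E3 = - 2 * \<kappa> * (\<kappa> - 1) * (\<kappa> - 2 + 3 * l) * ?c"
    unfolding w_def W_alpha2_def W_alpha1_def W_alpha0_def subdiag1_coeff_def subdiag2_coeff_t_def
    by (simp add: field_simps) (simp add: algebra_simps power2_eq_square)
  then show "?E3 = 0"
    by (simp add: cond)
  have "?E4 = \<kappa> * (\<kappa> - 1) * (2 * (m - l) * (\<kappa> - 2) + 6 * l * m - (\<kappa> - 2) * (\<kappa> - 3) / 2) * ?c"
    unfolding w_def W_alpha2_def W_alpha1_def W_alpha0_def subdiag1_coeff_def subdiag2_coeff_u_def
    by (simp add: field_simps) (simp add: algebra_simps power2_eq_square)
  then show "?E4 = 0"
    by (simp add: cond)
qed

lemma W_transform_identity: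
  fixes l m \<kappa> u t A A' A'' B B' C :: complex
  assumes cond: "(l + (\<kappa> - 2) / 3) * (m - (\<kappa> + 1) / 3) + (\<kappa> + 1) * (\<kappa> - 2) / 36 = 0"
  defines "w \<equiv> l - m + \<kappa> - 2"
  shows "W_alpha2 l \<kappa> * ((w + 1) * u * ((w + 1 + 1) * u * A + A')
            + ((w + 1 + 1) * (t - u\<^sup>2) * A + (w + 1 + 1) * u * A' + A''))
       + W_alpha1 l \<kappa> * ((w + 1) * u * (B + subdiag1_coeff l (\<kappa> - 1) * u * A)
            + (B' + subdiag1_coeff l (\<kappa> - 1) * ((t - u\<^sup>2) * A + u * A')))
       + W_alpha0 l \<kappa> * (C + subdiag1_coeff l (\<kappa> - 2) * u * B
            + (subdiag2_coeff_t l (\<kappa> - 2) * t + subdiag2_coeff_u l (\<kappa> - 2) * u\<^sup>2) * A)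
     = W_alpha2 l \<kappa> * A'' + W_alpha1 l \<kappa> * B' + W_alpha0 l \<kappa> * C"
    (is "?L = ?R")
proof -
  have "?L - ?R
     = u * A' * (W_alpha2 l \<kappa> * (2 * w + 3) + W_alpha1 l \<kappa> * subdiag1_coeff l (\<kappa> - 1))
       + u * B * (W_alpha1 l \<kappa> * (w + 1) + W_alpha0 l \<kappa> * subdiag1_coeff l (\<kappa> - 2))
       + t * A * (W_alpha2 l \<kappa> * (w + 2) + W_alpha1 l \<kappa> * subdiag1_coeff l (\<kappa> - 1)
                  + W_alpha0 l \<kappa> * subdiag2_coeff_t l (\<kappa> - 2))
       + u\<^sup>2 * A * (W_alpha2 l \<kappa> * w * (w + 2) + W_alpha1 l \<kappa> * w * subdiag1_coeff l (\<kappa> - 1)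
                  + W_alpha0 l \<kappa> * subdiag2_coeff_u l (\<kappa> - 2))"
    by (simp add: algebra_simps power2_eq_square)
  then show ?thesis
    by (simp add: W_alpha_relations[OF cond, folded w_def])
qed

lemma Wop_eq:
  "Wop k l m a x = W_alpha2 l (of_nat k) * Dv (Dv (a k)) x + W_alpha1 l (of_nat k) * Dv (a (k - 1)) x
     + W_alpha0 l (of_nat k) * a (k - 2) x"
  by (simp add: Wop_def W_alpha2_def W_alpha1_def W_alpha0_def Let_def)

lemma Wop_transform:
  assumes f: "diffeo_lift f" and k: "k = Suc (Suc K)"
    and cond: "(l + (of_nat k - 2) / 3) * (m - (of_nat k + 1) / 3) + (of_nat k + 1) * (of_nat k - 2) / 36 = 0"
    and sa: "smooth_per (a k)" "smooth_per (a (Suc K))"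
  defines "w \<equiv> l - m + of_nat k - 2" and "u \<equiv> deriv_ratio f 2" and "t \<equiv> deriv_ratio f 3"
  assumes bk: "\<And>y. b k y = deriv_powr f (w + 1 + 1) (inv f y) * a k (inv f y)"
    and bk1: "\<And>y. b (Suc K) y = deriv_powr f (w + 1) (inv f y) *
           (a (Suc K) (inv f y) + subdiag1_coeff l (of_nat k - 1) * u (inv f y) * a k (inv f y))"
    and bk0: "\<And>y. b K y = deriv_powr f w (inv f y) *
           (a K (inv f y) + subdiag1_coeff l (of_nat k - 2) * u (inv f y) * a (Suc K) (inv f y)
            + (subdiag2_coeff_t l (of_nat k - 2) * t (inv f y)
               + subdiag2_coeff_u l (of_nat k - 2) * (u (inv f y))\<^sup>2) * a k (inv f y))"
  shows "Wop k l m b = rho_dens (m - l - of_nat k + 2) (inv f) (Wop k l m a)"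
proof
  fix y
  define x where "x = inv f y"
  have km: "k - 1 = Suc K" "k - 2 = K"
    by (simp_all add: k)
  have exponent: "- (m - l - of_nat k + 2) = w"
    by (simp add: w_def)
  have bk_fun: "b k = (\<lambda>y. deriv_powr f (w + 1 + 1) (inv f y) * a k (inv f y))"
    by (rule ext) (rule bk)
  have Dv_Dv_bk: "Dv (Dv (b k)) y = deriv_powr f w x *
      ((w + 1) * u x * ((w + 1 + 1) * u x * a k x + Dv (a k) x)
       + ((w + 1 + 1) * (t x - (u x)\<^sup>2) * a k x + (w + 1 + 1) * u x * Dv (a k) x + Dv (Dv (a k)) x))"
    (is "_ = _ * ?A")
    unfolding bk_fun Dv_Dv_deriv_powr_mult_comp_inv[OF f sa(1)] x_def u_def t_def ..
  have bk1_fun: "b (Suc K) = (\<lambda>y. deriv_powr f (w + 1) (inv f y) *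
      (a (Suc K) (inv f y) + subdiag1_coeff l (of_nat k - 1) * u (inv f y) * a k (inv f y)))"
    by (rule ext) (rule bk1)
  have Dv_bk1: "Dv (b (Suc K)) y = deriv_powr f w x *
      ((w + 1) * u x * (a (Suc K) x + subdiag1_coeff l (of_nat k - 1) * u x * a k x)
       + (Dv (a (Suc K)) x + subdiag1_coeff l (of_nat k - 1) * ((t x - (u x)\<^sup>2) * a k x + u x * Dv (a k) x)))"
    (is "_ = _ * ?B")
    unfolding bk1_fun u_def Dv_deriv_powr_mult_comp_inv_add[OF f sa(2) sa(1)] x_def t_def ..
  have bk0': "b K y = deriv_powr f w x *
      (a K x + subdiag1_coeff l (of_nat k - 2) * u x * a (Suc K) x
       + (subdiag2_coeff_t l (of_nat k - 2) * t x + subdiag2_coeff_u l (of_nat k - 2) * (u x)\<^sup>2) * a k x)"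
    (is "_ = _ * ?C")
    unfolding x_def by (rule bk0)
  have "Wop k l m b y = deriv_powr f w x * (W_alpha2 l (of_nat k) * ?A + W_alpha1 l (of_nat k) * ?B
      + W_alpha0 l (of_nat k) * ?C)"
    unfolding Wop_eq km Dv_Dv_bk Dv_bk1 bk0' by (simp add: distrib_left)
  also have "\<dots> = deriv_powr f w x * (W_alpha2 l (of_nat k) * Dv (Dv (a k)) x
      + W_alpha1 l (of_nat k) * Dv (a (Suc K)) x + W_alpha0 l (of_nat k) * a K x)"
    unfolding W_transform_identity[OF cond, folded w_def] ..
  also have "\<dots> = rho_dens (m - l - of_nat k + 2) (inv f) (Wop k l m a) y"
    unfolding rho_dens_def powr_deriv_inv_eq_deriv_powr[OF f] exponent Wop_eq km x_def ..
  finally show "Wop k l m b y = rho_dens (m - l - of_nat k + 2) (inv f) (Wop k l m a) y" .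
qed

theorem proposition4p1:
  fixes k :: nat and l m :: complex and f :: "real \<Rightarrow> real"
    and a b :: "nat \<Rightarrow> real \<Rightarrow> complex"
  assumes "k \<ge> 3"
    and "(l + (of_nat k - 2) / 3) * (m - (of_nat k + 1) / 3)
           + (of_nat k + 1) * (of_nat k - 2) / 36 = 0"
    and "diffeo_lift f"
    and "\<forall>i\<le>k. smooth_per (a i)"
    and "\<forall>i\<le>k. smooth_per (b i)"
    and "\<forall>\<phi>. smooth_per \<phi> \<longrightarrow>
           diffop k b \<phi> = rho_dens m (inv f) (diffop k a (rho_dens l f \<phi>))"
  shows "Wop k l m b = rho_dens (m - l - of_nat k + 2) (inv f) (Wop k l m a)"
proof -
  define K where "K = k - 2"
  have k: "k = Suc (Suc K)"
    using assms(1) unfolding K_def by arith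
  have "smooth_per (a k)" "smooth_per (a (Suc K))"
    using assms(4) k by auto
  from this diffop_top_coeffs_transform[OF assms(3) k assms(6)]
  show ?thesis
    by (rule Wop_transform[OF assms(3) k assms(2)])
qed

end
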